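(* There is an absolute constant $c>0$ such that, for all sufficiently large $n$ and every $1\le k\le n$, the half-lazy $k$-column transvection walk $Q_{n,k}$ on $\mathrm{St}(n,k)$ satisfies \[ \tau_{\mathrm{mix}}(Q_{n,k})\ge c\max\left(n\log n,\ \frac{nk}{\log(en)}\right). \]
   Context: Let $V=\mathbb F_2^k$ and $\mathrm{St}(n,k)=\{(z_1,\dots,z_n)\in V^n:\operatorname{span}(z_1,\dots,z_n)=V\}$. The $k$-column transvection kernel $P_{n,k}$ on $\mathrm{St}(n,k)$ is: choose an ordered pair $(a,b)$ of distinct indices in $\{1,\dots,n\}$ uniformly at random and replace $z_b$ by $z_b+z_a$, leaving other rows unchanged. The half-lazy kernel is $Q_{n,k}=\tfrac12(I+P_{n,k})$, with uniform stationary distribution $\pi$ on $\mathrm{St}(n,k)$. The mixing time is $\tau_{\mathrm{mix}}(Q)=\min\{t\ge0:\max_x\|Q^t(x,\cdot)-\pi\|_{\mathrm{TV}}\le1/4\}$. *)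

theory Defs
  imports Complex_Main
begin

text \<open>Vectors of V = F_2^k are represented as bool lists of length k
  (True = 1, False = 0); addition is coordinatewise XOR.
  A configuration (z_1,...,z_n) is a list of n such vectors (0-indexed).\<close>

definition vadd :: "bool list \<Rightarrow> bool list \<Rightarrow> bool list" where
  "vadd u v = map2 (\<noteq>) u v"

definition vsum :: "nat \<Rightarrow> bool list list \<Rightarrow> nat set \<Rightarrow> bool list" where
  "vsum k zs S = map (\<lambda>j. odd (card {i \<in> S. zs ! i ! j})) [0..<k]"

definition spans :: "nat \<Rightarrow> bool list list \<Rightarrow> bool" where
  "spans k zs \<longleftrightarrow> (\<forall>v. length v = k \<longrightarrow> (\<exists>S \<subseteq> {..<length zs}. vsum k zs S = v))"

definition St :: "nat \<Rightarrow> nat \<Rightarrow> bool list list set" where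
  "St n k = {zs. length zs = n \<and> (\<forall>z \<in> set zs. length z = k) \<and> spans k zs}"

definition Pker :: "nat \<Rightarrow> bool list list \<Rightarrow> bool list list \<Rightarrow> real" where
  "Pker n x y = real (card {(a, b). a < n \<and> b < n \<and> a \<noteq> b \<and> x[b := vadd (x ! b) (x ! a)] = y})
                / (real n * (real n - 1))"

definition Qker :: "nat \<Rightarrow> bool list list \<Rightarrow> bool list list \<Rightarrow> real" where
  "Qker n x y = (1/2) * ((if x = y then 1 else 0) + Pker n x y)"

fun Qpow :: "nat \<Rightarrow> nat \<Rightarrow> nat \<Rightarrow> bool list list \<Rightarrow> bool list list \<Rightarrow> real" where
  "Qpow n k 0 x y = (if x = y then 1 else 0)"
| "Qpow n k (Suc t) x y = (\<Sum>w \<in> St n k. Qpow n k t x w * Qker n w y)"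

definition tv_dist :: "nat \<Rightarrow> nat \<Rightarrow> nat \<Rightarrow> bool list list \<Rightarrow> real" where
  "tv_dist n k t x = (1/2) * (\<Sum>y \<in> St n k. \<bar>Qpow n k t x y - 1 / real (card (St n k))\<bar>)"

definition tau_mix :: "nat \<Rightarrow> nat \<Rightarrow> nat" where
  "tau_mix n k = (LEAST t. \<forall>x \<in> St n k. tv_dist n k t x \<le> 1/4)"

end

theory Submission
  imports Defs "HOL-Real_Asymp.Real_Asymp"
begin

text \<open>
  Both lower bounds compare the walk started at the standard frame with the uniform distribution.

  Counting: a step has at most \<open>n^2\<close> outcomes, so after \<open>t\<close> steps the walk lives on at most
  \<open>n^(2t)\<close> frames, while there are at least \<open>2^((nk - 1)/4)\<close> frames (block upper triangular ones);
  being \<open>1/4\<close>-close to uniform therefore forces \<open>t \<ge> c nk / log n\<close>.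

  Coupon collector: a transvection can only create a nonzero row out of a nonzero source row, so the
  expected number of nonzero rows grows at most by the factor \<open>1 + 1/(2n)\<close> per step, starting from
  \<open>k\<close>.  A uniform frame, however, has more than \<open>n/8\<close> nonzero rows with probability at least
  \<open>3/7\<close>, because each fixed row vanishes for at most half of all frames.  For \<open>k \<le> c sqrt n\<close> this
  rules out mixing before \<open>n log n\<close> steps; for larger \<open>k\<close> the counting bound dominates.

  That the mixing time is attained at all follows from connectivity of the frames under transvections
  (row reduction) together with laziness, by a Doeblin contraction.
\<close>

lemma sum_le_markov:
  fixes p f :: "'a \<Rightarrow> real"
  assumes "finite S" "B \<subseteq> S" "0 < c"
    and "\<And>y. y \<in> S \<Longrightarrow> 0 \<le> p y" "\<And>y. y \<in> S \<Longrightarrow> 0 \<le> f y" "\<And>y. y \<in> B \<Longrightarrow> c \<le> f y"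
  shows "(\<Sum>y\<in>B. p y) \<le> (\<Sum>y\<in>S. p y * f y) / c"
proof -
  have "(\<Sum>y\<in>B. p y) \<le> (\<Sum>y\<in>B. p y * f y / c)"
  proof (intro sum_mono)
    fix y assume "y \<in> B"
    with assms have "p y * c \<le> p y * f y"
      by (intro mult_left_mono) auto
    with \<open>0 < c\<close> show "p y \<le> p y * f y / c"
      by (simp add: le_divide_eq)
  qed
  also have "\<dots> \<le> (\<Sum>y\<in>S. p y * f y / c)"
    using assms by (intro sum_mono2) auto
  finally show ?thesis
    by (simp add: sum_divide_distrib)
qed

lemma one_plus_power_le_exp: "-1 \<le> a \<Longrightarrow> (1 + a) ^ t \<le> exp (real t * a)"
  using power_mono[OF exp_ge_add_one_self[of a], of t] by (simp add: exp_of_nat_mult)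

lemma exp_lt_sqrt_if_lt_mult_ln:
  assumes "0 < x" and "t < x * ln x"
  shows "exp (t / (2 * x)) < sqrt x"
proof -
  have "t / (2 * x) < ln x / 2"
    using assms by (simp add: field_simps)
  moreover have "sqrt x = exp (ln x / 2)"
    using assms by (simp add: powr_half_sqrt[symmetric] powr_def)
  ultimately show ?thesis
    by simp
qed

lemma card_relpowp_le:
  fixes R :: "'a \<Rightarrow> 'a \<Rightarrow> bool"
  assumes "\<And>x. finite {y. R x y}" and "\<And>x. card {y. R x y} \<le> m"
  shows "finite {y. (R ^^ t) x y} \<and> card {y. (R ^^ t) x y} \<le> m ^ t"
proof (induction t)
  case 0
  have "{y. (R ^^ 0) x y} = {x}"
    by auto
  then show ?case by simp
next
  case (Suc t)
  have step: "{y. (R ^^ Suc t) x y} = (\<Union>w\<in>{y. (R ^^ t) x y}. {y. R w y})"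
    by auto
  have "card {y. (R ^^ Suc t) x y} \<le> (\<Sum>w\<in>{y. (R ^^ t) x y}. card {y. R w y})"
    unfolding step using Suc by (intro card_UN_le) simp
  also have "\<dots> \<le> card {y. (R ^^ t) x y} * m"
    using sum_bounded_above[of _ "\<lambda>w. card {y. R w y}" m] assms(2) by simp
  also have "\<dots> \<le> m ^ Suc t"
    using mult_right_mono[of "card {y. (R ^^ t) x y}" "m ^ t" m] Suc by (simp add: mult.commute)
  finally have "card {y. (R ^^ Suc t) x y} \<le> m ^ Suc t" .
  moreover have "finite {y. (R ^^ Suc t) x y}"
    unfolding step using Suc assms(1) by blast
  ultimately show ?case by blast
qed

section \<open>Vectors over F_2\<close>

abbreviation vzero :: "nat \<Rightarrow> bool list" where
  "vzero k \<equiv> replicate k False"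

definition indicator_vec :: "nat \<Rightarrow> nat set \<Rightarrow> bool list" where
  "indicator_vec k T = map (\<lambda>j. j \<in> T) [0..<k]"

abbreviation unit_vec :: "nat \<Rightarrow> nat \<Rightarrow> bool list" where
  "unit_vec k i \<equiv> indicator_vec k {i}"

lemma length_indicator_vec [simp]: "length (indicator_vec k T) = k"
  by (simp add: indicator_vec_def)

lemma nth_indicator_vec [simp]: "j < k \<Longrightarrow> indicator_vec k T ! j = (j \<in> T)"
  by (simp add: indicator_vec_def)

lemma length_vadd [simp]: "length (vadd u v) = min (length u) (length v)"
  by (simp add: vadd_def)

lemma nth_vadd [simp]: "i < length u \<Longrightarrow> i < length v \<Longrightarrow> vadd u v ! i = (u ! i \<noteq> v ! i)"
  by (simp add: vadd_def)

lemma length_vsum [simp]: "length (vsum k zs S) = k"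
  by (simp add: vsum_def)

lemma nth_vsum [simp]: "j < k \<Longrightarrow> vsum k zs S ! j = odd (card {i \<in> S. zs ! i ! j})"
  by (simp add: vsum_def)

lemma vadd_commute: "vadd u v = vadd v u"
  by (rule nth_equalityI) auto

lemma vadd_assoc: "vadd (vadd u v) w = vadd u (vadd v w)"
  by (rule nth_equalityI) auto

lemma vadd_vadd_cancel: "length u = length v \<Longrightarrow> vadd (vadd u v) v = u"
  by (rule nth_equalityI) auto

lemma vadd_self: "vadd v v = vzero (length v)"
  by (rule nth_equalityI) auto

lemma vadd_vzero: "length u \<le> m \<Longrightarrow> vadd u (vzero m) = u"
  by (rule nth_equalityI) auto

lemma vadd_indicator_vec_insert:
  "j \<notin> T \<Longrightarrow> indicator_vec k (insert j T) = vadd (unit_vec k j) (indicator_vec k T)"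
  by (rule nth_equalityI) auto

lemma odd_card_sym_diff:
  assumes "finite A" "finite B"
  shows "odd (card (sym_diff A B)) \<longleftrightarrow> odd (card A) \<noteq> odd (card B)"
proof -
  have "card (sym_diff A B) = card (A - B) + card (B - A)"
    using assms by (intro card_Un_disjoint) auto
  moreover have "card A = card (A - B) + card (A \<inter> B)" "card B = card (B - A) + card (A \<inter> B)"
    using assms by (simp_all add: card_Int_Diff[of B A] card_Int_Diff[of A B] Int_commute)
  ultimately show ?thesis by auto
qed

lemma vsum_sym_diff:
  assumes "finite S" "finite T"
  shows "vadd (vsum k zs S) (vsum k zs T) = vsum k zs (sym_diff S T)"
proof (rule nth_equalityI)
  fix j assume "j < length (vadd (vsum k zs S) (vsum k zs T))"
  then have j: "j < k" by simp
  let ?A = "{i \<in> S. zs ! i ! j}" and ?B = "{i \<in> T. zs ! i ! j}"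
  have "{i \<in> sym_diff S T. zs ! i ! j} = sym_diff ?A ?B"
    by auto
  with j assms show "vadd (vsum k zs S) (vsum k zs T) ! j = vsum k zs (sym_diff S T) ! j"
    by (simp add: odd_card_sym_diff)
qed simp

lemma vsum_cong: "(\<And>i. i \<in> S \<Longrightarrow> zs ! i = ys ! i) \<Longrightarrow> vsum k zs S = vsum k ys S"
  unfolding vsum_def by (intro map_cong refl arg_cong[where f = odd] arg_cong[where f = card]) auto

lemma vsum_empty [simp]: "vsum k zs {} = vzero k"
  by (rule nth_equalityI) auto

lemma vsum_insert:
  assumes "finite S" "b \<notin> S" "length (zs ! b) = k"
  shows "vsum k zs (insert b S) = vadd (vsum k zs S) (zs ! b)"
proof (rule nth_equalityI)
  fix j assume "j < length (vsum k zs (insert b S))"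
  then have j: "j < k" by simp
  have "{i \<in> insert b S. zs ! i ! j} =
      (if zs ! b ! j then insert b {i \<in> S. zs ! i ! j} else {i \<in> S. zs ! i ! j})"
    by auto
  then show "vsum k zs (insert b S) ! j = vadd (vsum k zs S) (zs ! b) ! j"
    using j assms by (simp add: card_insert_if)
qed (use assms in simp)

lemma vsum_singleton: "length (zs ! a) = k \<Longrightarrow> vsum k zs {a} = zs ! a"
  using vsum_insert[of "{}" a zs k] by (simp add: vadd_commute vadd_vzero)

lemma vsum_unit_rows:
  assumes "\<And>i. i \<in> T \<Longrightarrow> zs ! i = unit_vec k i" and "T \<subseteq> {..<k}"
  shows "vsum k zs T = indicator_vec k T"
proof (rule nth_equalityI)
  fix j assume "j < length (vsum k zs T)"
  then have j: "j < k" by simp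
  have "{i \<in> T. zs ! i ! j} = T \<inter> {j}"
    using assms j by auto
  then show "vsum k zs T ! j = indicator_vec k T ! j"
    using j by (auto simp: Int_insert_right)
qed simp

definition in_span :: "nat \<Rightarrow> bool list list \<Rightarrow> bool list \<Rightarrow> bool" where
  "in_span k zs v \<longleftrightarrow> (\<exists>S \<subseteq> {..<length zs}. vsum k zs S = v)"

lemma spans_iff_in_span: "spans k zs \<longleftrightarrow> (\<forall>v. length v = k \<longrightarrow> in_span k zs v)"
  by (simp add: spans_def in_span_def)

lemma in_span_vzero: "in_span k zs (vzero k)"
  unfolding in_span_def by (intro exI[of _ "{}"]) auto

lemma in_span_nth: "i < length zs \<Longrightarrow> length (zs ! i) = k \<Longrightarrow> in_span k zs (zs ! i)"
  unfolding in_span_def by (intro exI[of _ "{i}"]) (auto simp: vsum_singleton)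

lemma in_span_vadd: "in_span k zs u \<Longrightarrow> in_span k zs v \<Longrightarrow> in_span k zs (vadd u v)"
proof -
  assume "in_span k zs u" "in_span k zs v"
  then obtain S T where S: "S \<subseteq> {..<length zs}" "vsum k zs S = u"
    and T: "T \<subseteq> {..<length zs}" "vsum k zs T = v"
    unfolding in_span_def by blast
  then have "vadd u v = vsum k zs (sym_diff S T)"
    using finite_subset[OF S(1)] finite_subset[OF T(1)] vsum_sym_diff by blast
  then show ?thesis
    unfolding in_span_def using S T by (intro exI[of _ "sym_diff S T"]) auto
qed

lemma in_span_indicator_vec:
  assumes "\<And>j. j \<in> T \<Longrightarrow> in_span k zs (unit_vec k j)" and "finite T"
  shows "in_span k zs (indicator_vec k T)"
  using assms(2,1)
proof (induction T rule: finite_induct)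
  case empty
  then show ?case using in_span_vzero[of k zs] by (simp add: indicator_vec_def map_replicate_const)
next
  case (insert j T)
  then show ?case
    by (subst vadd_indicator_vec_insert) (auto intro: in_span_vadd)
qed

lemma spans_if_unit_vecs_in_span:
  assumes "\<And>j. j < k \<Longrightarrow> in_span k zs (unit_vec k j)"
  shows "spans k zs"
  unfolding spans_iff_in_span
proof (intro allI impI)
  fix v :: "bool list" assume v: "length v = k"
  have "in_span k zs (indicator_vec k {j. j < k \<and> v ! j})"
    using assms by (rule in_span_indicator_vec) auto
  moreover have "indicator_vec k {j. j < k \<and> v ! j} = v"
    using v by (intro nth_equalityI) auto
  ultimately show "in_span k zs v" by simp
qed

section \<open>Doubly stochastic kernels\<close>

fun kpow :: "'a set \<Rightarrow> ('a \<Rightarrow> 'a \<Rightarrow> real) \<Rightarrow> nat \<Rightarrow> 'a \<Rightarrow> 'a \<Rightarrow> real" where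
  "kpow S K 0 x y = (if x = y then 1 else 0)"
| "kpow S K (Suc t) x y = (\<Sum>w\<in>S. kpow S K t x w * K w y)"

definition tv_unif :: "'a set \<Rightarrow> ('a \<Rightarrow> 'a \<Rightarrow> real) \<Rightarrow> nat \<Rightarrow> 'a \<Rightarrow> real" where
  "tv_unif S K t x = 1/2 * (\<Sum>y\<in>S. \<bar>kpow S K t x y - 1 / real (card S)\<bar>)"

locale doubly_stochastic =
  fixes S :: "'a set" and K :: "'a \<Rightarrow> 'a \<Rightarrow> real"
  assumes finite_space [simp]: "finite S"
    and kernel_nonneg: "x \<in> S \<Longrightarrow> y \<in> S \<Longrightarrow> 0 \<le> K x y"
    and row_sum: "x \<in> S \<Longrightarrow> (\<Sum>y\<in>S. K x y) = 1"
    and col_sum: "y \<in> S \<Longrightarrow> (\<Sum>x\<in>S. K x y) = 1"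
begin

lemma kpow_nonneg: "y \<in> S \<Longrightarrow> 0 \<le> kpow S K t x y"
  by (induction t arbitrary: y) (auto intro!: sum_nonneg mult_nonneg_nonneg kernel_nonneg)

lemma sum_kpow_Suc_mult:
  "(\<Sum>y\<in>S. kpow S K (Suc t) x y * g y) = (\<Sum>w\<in>S. kpow S K t x w * (\<Sum>y\<in>S. K w y * g y))"
  by (simp add: sum_distrib_left sum_distrib_right mult.assoc) (rule sum.swap)

lemma kpow_row_sum: "x \<in> S \<Longrightarrow> (\<Sum>y\<in>S. kpow S K t x y) = 1"
  by (induction t) (simp_all add: sum_kpow_Suc_mult[where g = "\<lambda>_. 1", simplified] row_sum)

lemma kpow_col_sum: "y \<in> S \<Longrightarrow> (\<Sum>x\<in>S. kpow S K t x y) = 1"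
proof (induction t arbitrary: y)
  case (Suc t)
  have "(\<Sum>x\<in>S. kpow S K (Suc t) x y) = (\<Sum>w\<in>S. (\<Sum>x\<in>S. kpow S K t x w) * K w y)"
    by (simp add: sum_distrib_right) (rule sum.swap)
  also have "\<dots> = 1"
    using Suc by (simp add: col_sum)
  finally show ?case .
qed (simp add: sum.delta')

lemma kpow_add: "y \<in> S \<Longrightarrow> kpow S K (t + s) x y = (\<Sum>w\<in>S. kpow S K t x w * kpow S K s w y)"
proof (induction s arbitrary: y)
  case 0
  then show ?case by (simp add: if_distrib sum.delta' cong: if_cong)
next
  case (Suc s)
  have "kpow S K (t + Suc s) x y = (\<Sum>v\<in>S. (\<Sum>w\<in>S. kpow S K t x w * kpow S K s w v) * K v y)"
    using Suc by simp
  also have "\<dots> = (\<Sum>w\<in>S. kpow S K t x w * kpow S K (Suc s) w y)"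
    by (simp add: sum_distrib_left sum_distrib_right mult.assoc) (rule sum.swap)
  finally show ?case .
qed

lemma kpow_expectation_le:
  assumes "x \<in> S" and "0 \<le> r" and drift: "\<And>w. w \<in> S \<Longrightarrow> (\<Sum>y\<in>S. K w y * f y) \<le> r * f w"
  shows "(\<Sum>y\<in>S. kpow S K t x y * f y) \<le> r ^ t * f x"
proof (induction t)
  case 0
  then show ?case using \<open>x \<in> S\<close> by (simp add: if_distrib if_distribR sum.delta cong: if_cong)
next
  case (Suc t)
  have "(\<Sum>y\<in>S. kpow S K (Suc t) x y * f y) = (\<Sum>w\<in>S. kpow S K t x w * (\<Sum>y\<in>S. K w y * f y))"
    by (rule sum_kpow_Suc_mult)
  also have "\<dots> \<le> (\<Sum>w\<in>S. kpow S K t x w * (r * f w))"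
    by (intro sum_mono mult_left_mono drift kpow_nonneg)
  also have "\<dots> = r * (\<Sum>w\<in>S. kpow S K t x w * f w)"
    by (simp add: sum_distrib_left mult.left_commute)
  also have "\<dots> \<le> r * (r ^ t * f x)"
    using Suc \<open>0 \<le> r\<close> by (rule mult_left_mono)
  finally show ?case by simp
qed

lemma kpow_Suc_ge_diag: "y \<in> S \<Longrightarrow> kpow S K t x y * K y y \<le> kpow S K (Suc t) x y"
  by (auto intro!: member_le_sum mult_nonneg_nonneg kpow_nonneg kernel_nonneg)

lemma kpow_ge_power_if_relpowp:
  assumes "(R ^^ j) x y" and "x \<in> S" and "0 \<le> \<epsilon>"
    and R: "\<And>w z. w \<in> S \<Longrightarrow> R w z \<Longrightarrow> z \<in> S \<and> \<epsilon> \<le> K w z"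
  shows "y \<in> S \<and> \<epsilon> ^ j \<le> kpow S K j x y"
  using assms(1)
proof (induction j arbitrary: y)
  case 0
  then show ?case using \<open>x \<in> S\<close> by simp
next
  case (Suc j)
  then obtain w where w: "(R ^^ j) x w" "R w y" by auto
  with Suc.IH have wS: "w \<in> S" and IH: "\<epsilon> ^ j \<le> kpow S K j x w" by auto
  with R w(2) have yS: "y \<in> S" and Kwy: "\<epsilon> \<le> K w y" by auto
  have "\<epsilon> ^ Suc j \<le> kpow S K j x w * K w y"
    using IH Kwy \<open>0 \<le> \<epsilon>\<close> by (simp add: mult_mono mult.commute)
  also have "\<dots> \<le> kpow S K (Suc j) x y"
    using wS yS by (auto intro!: member_le_sum mult_nonneg_nonneg kpow_nonneg kernel_nonneg)
  finally show ?case using yS by simp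
qed

lemma kpow_uniform_lower_bound:
  assumes "0 \<le> \<epsilon>" and lazy: "\<And>x. x \<in> S \<Longrightarrow> \<epsilon> \<le> K x x"
    and R: "\<And>w z. w \<in> S \<Longrightarrow> R w z \<Longrightarrow> z \<in> S \<and> \<epsilon> \<le> K w z"
    and connected: "\<And>x y. x \<in> S \<Longrightarrow> y \<in> S \<Longrightarrow> R\<^sup>*\<^sup>* x y"
  shows "\<exists>D. \<forall>x\<in>S. \<forall>y\<in>S. \<epsilon> ^ D \<le> kpow S K D x y"
proof -
  have pad: "\<epsilon> ^ (j + i) \<le> kpow S K (j + i) x y"
    if "y \<in> S" "\<epsilon> ^ j \<le> kpow S K j x y" for i j x y
  proof (induction i)
    case (Suc i)
    have "\<epsilon> ^ Suc (j + i) \<le> kpow S K (j + i) x y * K y y"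
      using Suc lazy[OF \<open>y \<in> S\<close>] \<open>0 \<le> \<epsilon>\<close> by (simp add: mult_mono mult.commute)
    also have "\<dots> \<le> kpow S K (Suc (j + i)) x y"
      using \<open>y \<in> S\<close> by (rule kpow_Suc_ge_diag)
    finally show ?case by simp
  qed (use that in simp)
  obtain J where J: "\<And>x y. x \<in> S \<Longrightarrow> y \<in> S \<Longrightarrow> (R ^^ J x y) x y"
    using connected by (metis rtranclp_power)
  define D where "D = Max ((\<lambda>(x, y). J x y) ` (S \<times> S))"
  have "\<epsilon> ^ D \<le> kpow S K D x y" if "x \<in> S" "y \<in> S" for x y
  proof -
    have "J x y \<le> D"
      unfolding D_def using that by (intro Max_ge) auto
    moreover have "\<epsilon> ^ J x y \<le> kpow S K (J x y) x y"
      using kpow_ge_power_if_relpowp[OF J[OF that] \<open>x \<in> S\<close> \<open>0 \<le> \<epsilon>\<close> R] by blast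
    ultimately show ?thesis
      using pad[OF \<open>y \<in> S\<close>, of "J x y" x "D - J x y"] by simp
  qed
  then show ?thesis by blast
qed

lemma tv_unif_contract:
  assumes low: "\<forall>w\<in>S. \<forall>y\<in>S. \<delta> \<le> kpow S K D w y" and x: "x \<in> S"
  shows "tv_unif S K (t + D) x \<le> (1 - real (card S) * \<delta>) * tv_unif S K t x"
proof -
  define N where "N = real (card S)"
  define f where "f w = kpow S K t x w - 1 / N" for w
  have "N > 0"
    using x by (auto simp: N_def card_gt_0_iff)
  then have sum_f: "(\<Sum>w\<in>S. f w) = 0"
    using kpow_row_sum[OF x] by (simp add: f_def sum_subtractf N_def) (use x in blast)
  \<comment> \<open>subtracting \<open>\<delta>\<close> keeps the coefficients nonnegative and, as \<open>f\<close> has total mass 0, changes nothing\<close>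
  have deviation: "kpow S K (t + D) x y - 1 / N = (\<Sum>w\<in>S. f w * (kpow S K D w y - \<delta>))"
    if y: "y \<in> S" for y
  proof -
    have "f w * (kpow S K D w y - \<delta>) =
        kpow S K t x w * kpow S K D w y - 1 / N * kpow S K D w y - \<delta> * f w" for w
      by (simp add: f_def algebra_simps)
    then have "(\<Sum>w\<in>S. f w * (kpow S K D w y - \<delta>)) =
        (\<Sum>w\<in>S. kpow S K t x w * kpow S K D w y) - 1 / N * (\<Sum>w\<in>S. kpow S K D w y) - \<delta> * (\<Sum>w\<in>S. f w)"
      by (simp add: sum_subtractf sum_distrib_left)
    then show ?thesis
      using kpow_add[OF y, of t D x] kpow_col_sum[OF y, of D] sum_f by simp
  qed
  have "(\<Sum>y\<in>S. \<bar>kpow S K (t + D) x y - 1 / N\<bar>) \<le> (\<Sum>y\<in>S. \<Sum>w\<in>S. \<bar>f w\<bar> * (kpow S K D w y - \<delta>))"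
  proof (intro sum_mono)
    fix y assume "y \<in> S"
    then have "\<bar>kpow S K (t + D) x y - 1 / N\<bar> \<le> (\<Sum>w\<in>S. \<bar>f w * (kpow S K D w y - \<delta>)\<bar>)"
      by (simp only: deviation sum_abs)
    also have "\<dots> = (\<Sum>w\<in>S. \<bar>f w\<bar> * (kpow S K D w y - \<delta>))"
      using low \<open>y \<in> S\<close> by (intro sum.cong) (auto simp: abs_mult)
    finally show "\<bar>kpow S K (t + D) x y - 1 / N\<bar> \<le> \<dots>" .
  qed
  also have "\<dots> = (\<Sum>w\<in>S. \<bar>f w\<bar> * (1 - N * \<delta>))"
    by (subst sum.swap) (simp add: sum_distrib_left[symmetric] sum_subtractf kpow_row_sum N_def)
  also have "\<dots> = (1 - N * \<delta>) * (\<Sum>w\<in>S. \<bar>f w\<bar>)"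
    by (simp add: sum_distrib_left mult.commute)
  finally have "(\<Sum>y\<in>S. \<bar>kpow S K (t + D) x y - 1 / N\<bar>) \<le> (1 - N * \<delta>) * (\<Sum>w\<in>S. \<bar>f w\<bar>)" .
  then show ?thesis
    by (simp add: tv_unif_def f_def N_def)
qed

lemma tv_unif_0_le: "x \<in> S \<Longrightarrow> tv_unif S K 0 x \<le> 1"
proof -
  assume x: "x \<in> S"
  define N where "N = real (card S)"
  have N: "N > 0"
    using x by (auto simp: N_def card_gt_0_iff)
  have "(\<Sum>y\<in>S. \<bar>kpow S K 0 x y - 1 / N\<bar>) \<le> (\<Sum>y\<in>S. (if x = y then 1 else 0) + 1 / N)"
    using N by (intro sum_mono) (simp add: abs_le_iff)
  also have "\<dots> = 2"
    using x N by (simp add: sum.distrib N_def) (use x in blast)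
  finally show ?thesis
    by (simp add: tv_unif_def N_def)
qed

lemma tv_unif_eventually_le:
  assumes low: "\<forall>x\<in>S. \<forall>y\<in>S. \<delta> \<le> kpow S K D x y" and "0 < \<delta>" and "0 < e"
  shows "\<exists>t. \<forall>x\<in>S. tv_unif S K t x \<le> e"
proof (cases "S = {}")
  case False
  then obtain x0 where x0: "x0 \<in> S" by blast
  define q where "q = 1 - real (card S) * \<delta>"
  have "real (card S) * \<delta> \<le> (\<Sum>y\<in>S. kpow S K D x0 y)"
    using low x0 by (simp add: sum_mono[of S "\<lambda>_. \<delta>", simplified])
  moreover have "0 < real (card S)"
    using False by (simp add: card_gt_0_iff)
  ultimately have q: "0 \<le> q" "q < 1"
    using kpow_row_sum[OF x0] \<open>0 < \<delta>\<close> by (simp_all add: q_def)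
  have decay: "tv_unif S K (i * D) x \<le> q ^ i" if "x \<in> S" for i x
  proof (induction i)
    case 0
    then show ?case using tv_unif_0_le[OF that] by simp
  next
    case (Suc i)
    have "tv_unif S K (i * D + D) x \<le> q * tv_unif S K (i * D) x"
      unfolding q_def using tv_unif_contract[OF low that] .
    also have "\<dots> \<le> q * q ^ i"
      using Suc q by (intro mult_left_mono)
    finally show ?case by (simp add: add.commute)
  qed
  obtain m where "q ^ m < e"
    using real_arch_pow_inv[OF \<open>0 < e\<close> q(2)] by blast
  then have "\<forall>x\<in>S. tv_unif S K (m * D) x \<le> e"
    using decay by (meson less_imp_le order.trans)
  then show ?thesis ..
qed simp

lemma tv_unif_ge_mass_diff:
  assumes x: "x \<in> S" and B: "B \<subseteq> S"
  shows "real (card B) / real (card S) - (\<Sum>y\<in>B. kpow S K t x y) \<le> tv_unif S K t x"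
proof -
  define N where "N = real (card S)"
  define p where "p y = kpow S K t x y" for y
  have split: "(\<Sum>y\<in>S. h y) = (\<Sum>y\<in>B. h y) + (\<Sum>y\<in>S - B. h y)" for h :: "'a \<Rightarrow> real"
    using sum.subset_diff[OF B finite_space, of h] by (simp add: add.commute)
  have mass: "(\<Sum>y\<in>B. p y) + (\<Sum>y\<in>S - B. p y) = 1"
    using kpow_row_sum[OF x] split[of p] by (simp add: p_def)
  have "real (card B) + real (card (S - B)) = N"
    using split[of "\<lambda>_. 1"] by (simp add: N_def)
  moreover have "N > 0"
    using x by (auto simp: N_def card_gt_0_iff)
  ultimately have uniform: "real (card B) / N + real (card (S - B)) / N = 1"
    by (simp add: field_simps)
  have "real (card B) / N - (\<Sum>y\<in>B. p y) \<le> (\<Sum>y\<in>B. \<bar>p y - 1 / N\<bar>)"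
    using sum_mono[of B "\<lambda>y. 1 / N - p y" "\<lambda>y. \<bar>p y - 1 / N\<bar>"] by (simp add: sum_subtractf)
  moreover have "(\<Sum>y\<in>S - B. p y) - real (card (S - B)) / N \<le> (\<Sum>y\<in>S - B. \<bar>p y - 1 / N\<bar>)"
    using sum_mono[of "S - B" "\<lambda>y. p y - 1 / N" "\<lambda>y. \<bar>p y - 1 / N\<bar>"] by (simp add: sum_subtractf)
  moreover have "tv_unif S K t x = 1/2 * (\<Sum>y\<in>S. \<bar>p y - 1 / N\<bar>)"
    by (simp add: tv_unif_def p_def N_def)
  ultimately have "real (card B) / N - (\<Sum>y\<in>B. p y) \<le> tv_unif S K t x"
    using mass uniform split[of "\<lambda>y. \<bar>p y - 1 / N\<bar>"] by linarith
  then show ?thesis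
    by (simp add: p_def N_def)
qed

lemma kpow_support:
  assumes "y \<in> S" and "kpow S K t x y \<noteq> 0"
  shows "((\<lambda>w z. w \<in> S \<and> z \<in> S \<and> K w z \<noteq> 0) ^^ t) x y"
  using assms
proof (induction t arbitrary: y)
  case (Suc t)
  then obtain w where "w \<in> S" "kpow S K t x w * K w y \<noteq> 0"
    by (auto elim: sum.not_neutral_contains_not_neutral)
  with Suc show ?case by auto
qed (simp split: if_splits)

lemma tv_unif_ge_few_successors:
  assumes x: "x \<in> S" and few: "\<And>w. w \<in> S \<Longrightarrow> card {y \<in> S. K w y \<noteq> 0} \<le> m"
  shows "1 - real m ^ t / real (card S) \<le> tv_unif S K t x"
proof -
  define R where "R w z \<longleftrightarrow> w \<in> S \<and> z \<in> S \<and> K w z \<noteq> 0" for w z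
  define reach where "reach = {y. (R ^^ t) x y}"
  have "{z. R w z} = (if w \<in> S then {y \<in> S. K w y \<noteq> 0} else {})" for w
    by (auto simp: R_def)
  then have "finite reach" "card reach \<le> m ^ t"
    unfolding reach_def using card_relpowp_le[of R m t x] few by (simp_all split: if_splits)
  moreover have "card S = card (S \<inter> reach) + card (S - reach)"
    by (rule card_Int_Diff) simp
  moreover have "card (S \<inter> reach) \<le> card reach"
    using \<open>finite reach\<close> by (intro card_mono) auto
  ultimately have "card S \<le> card (S - reach) + m ^ t"
    by linarith
  then have "real (card S) - real m ^ t \<le> real (card (S - reach))"
    by (simp add: le_diff_conv flip: of_nat_add of_nat_power)
  moreover have "\<forall>y\<in>S - reach. kpow S K t x y = 0"
    using kpow_support[of _ t x] unfolding reach_def R_def by blast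
  moreover have "real (card S) > 0"
    using x by (auto simp: card_gt_0_iff)
  ultimately have "(real (card S) - real m ^ t) / real (card S) \<le> real (card (S - reach)) / real (card S)"
    by (intro divide_right_mono) auto
  moreover have "(real (card S) - real m ^ t) / real (card S) = 1 - real m ^ t / real (card S)"
    using x by (auto simp: diff_divide_distrib)
  ultimately have "1 - real m ^ t / real (card S) \<le> real (card (S - reach)) / real (card S)"
    by simp
  also have "\<dots> \<le> tv_unif S K t x"
    using tv_unif_ge_mass_diff[OF x, of "S - reach" t] \<open>\<forall>y\<in>S - reach. kpow S K t x y = 0\<close> by simp
  finally show ?thesis .
qed

end

section \<open>The transvection walk\<close>

definition transvection :: "bool list list \<Rightarrow> nat \<times> nat \<Rightarrow> bool list list" where
  "transvection x p = (case p of (a, b) \<Rightarrow> x[b := vadd (x ! b) (x ! a)])"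

definition off_diag_pairs :: "nat \<Rightarrow> (nat \<times> nat) set" where
  "off_diag_pairs n = {(a, b). a < n \<and> b < n \<and> a \<noteq> b}"

lemma finite_off_diag_pairs [simp]: "finite (off_diag_pairs n)"
  unfolding off_diag_pairs_def by (rule finite_subset[of _ "{..<n} \<times> {..<n}"]) auto

lemma card_off_diag_pairs: "card (off_diag_pairs n) = n * (n - 1)"
proof -
  have "off_diag_pairs n = {..<n} \<times> {..<n} - (\<lambda>a. (a, a)) ` {..<n}"
    unfolding off_diag_pairs_def by auto
  moreover have "card ((\<lambda>a. (a, a)) ` {..<n}) = n"
    by (subst card_image) (auto simp: inj_on_def)
  ultimately have "card (off_diag_pairs n) = n * n - n"
    using card_Diff_subset[of "(\<lambda>a. (a, a)) ` {..<n}" "{..<n} \<times> {..<n}"] by auto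
  then show ?thesis
    by (simp add: diff_mult_distrib2)
qed

lemma St_memD:
  assumes "x \<in> St n k"
  shows "length x = n" and "\<And>i. i < n \<Longrightarrow> length (x ! i) = k" and "spans k x"
  using assms unfolding St_def by auto

lemma St_memI:
  assumes "length x = n" and "\<And>i. i < n \<Longrightarrow> length (x ! i) = k" and "spans k x"
  shows "x \<in> St n k"
  using assms unfolding St_def by (auto simp: in_set_conv_nth)

lemma finite_St [simp]: "finite (St n k)"
proof (rule finite_subset)
  show "St n k \<subseteq> {x. set x \<subseteq> {v. set v \<subseteq> UNIV \<and> length v = k} \<and> length x = n}"
    by (auto simp: St_def)
  show "finite {x. set x \<subseteq> {v. set v \<subseteq> (UNIV :: bool set) \<and> length v = k} \<and> length x = n}"
    by (intro finite_lists_length_eq) auto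
qed

lemma length_transvection [simp]: "length (transvection x p) = length x"
  by (simp add: transvection_def split: prod.split)

lemma nth_transvection [simp]:
  "i < length x \<Longrightarrow> transvection x (a, b) ! i = (if i = b then vadd (x ! b) (x ! a) else x ! i)"
  by (simp add: transvection_def)

lemma vsum_transvection_notin:
  assumes "b \<notin> S"
  shows "vsum k (transvection x (a, b)) S = vsum k x S"
proof (rule vsum_cong)
  fix i assume "i \<in> S"
  with assms have "i \<noteq> b"
    by blast
  then show "transvection x (a, b) ! i = x ! i"
    by (simp add: transvection_def)
qed

lemma vsum_transvection_in:
  assumes x: "x \<in> St n k" and S: "S \<subseteq> {..<n}" "b \<in> S" and a: "a < n" "a \<noteq> b"
  shows "vsum k (transvection x (a, b)) S = vsum k x (sym_diff S {a})"
proof -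
  note len = St_memD[OF x]
  have fin: "finite (S - {b})" and b: "b < n"
    using S finite_subset by auto
  have "vsum k (transvection x (a, b)) S = vsum k (transvection x (a, b)) (insert b (S - {b}))"
    using S by (simp add: insert_absorb)
  also have "\<dots> = vadd (vsum k (transvection x (a, b)) (S - {b})) (transvection x (a, b) ! b)"
    using fin b len a by (intro vsum_insert) auto
  also have "\<dots> = vadd (vsum k x (S - {b})) (vadd (x ! b) (x ! a))"
    using b len by (simp add: vsum_transvection_notin)
  also have "\<dots> = vadd (vsum k x (insert b (S - {b}))) (x ! a)"
    using fin b len by (subst vsum_insert) (auto simp: vadd_assoc)
  also have "\<dots> = vadd (vsum k x S) (vsum k x {a})"
    using S a len by (simp add: insert_absorb vsum_singleton)
  also have "\<dots> = vsum k x (sym_diff S {a})"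
    using finite_subset[OF S(1)] by (simp add: vsum_sym_diff)
  finally show ?thesis .
qed

lemma transvection_in_St:
  assumes x: "x \<in> St n k" and p: "p \<in> off_diag_pairs n"
  shows "transvection x p \<in> St n k"
proof -
  obtain a b where ab: "p = (a, b)" "a < n" "b < n" "a \<noteq> b"
    using p by (auto simp: off_diag_pairs_def)
  note len = St_memD[OF x]
  have "in_span k (transvection x p) v" if "length v = k" for v
  proof -
    have "\<exists>S \<subseteq> {..<n}. vsum k x S = v"
      using len(3) len(1) that unfolding spans_def by simp
    then obtain S where S: "S \<subseteq> {..<n}" "vsum k x S = v"
      by blast
    show ?thesis
    proof (cases "b \<in> S")
      case False
      then show ?thesis
        using S len(1) ab by (auto simp: in_span_def vsum_transvection_notin)
    next
      case True
      \<comment> \<open>row \<open>b\<close> now carries an extra \<open>x ! a\<close>, which toggling \<open>a\<close> compensates\<close>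
      let ?T = "sym_diff S {a}"
      have T: "?T \<subseteq> {..<n}" "b \<in> ?T"
        using S True ab by auto
      have "sym_diff ?T {a} = S"
        by auto
      then have "vsum k (transvection x p) ?T = v"
        using vsum_transvection_in[OF x T ab(2) ab(4)] S ab(1) by simp
      then show ?thesis
        using S ab len(1) unfolding in_span_def by (intro exI[of _ ?T]) auto
    qed
  qed
  then show ?thesis
    using len ab by (intro St_memI) (auto simp: nth_transvection spans_iff_in_span)
qed

lemma transvection_transvection:
  assumes "x \<in> St n k" and "p \<in> off_diag_pairs n"
  shows "transvection (transvection x p) p = x"
  using assms St_memD[OF assms(1)]
  by (intro nth_equalityI) (auto simp: off_diag_pairs_def transvection_def nth_list_update vadd_vadd_cancel)

lemma Pker_eq_card:
  "Pker n x y = real (card {p \<in> off_diag_pairs n. transvection x p = y}) / (real n * (real n - 1))"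
proof -
  have "{(a, b). a < n \<and> b < n \<and> a \<noteq> b \<and> x[b := vadd (x ! b) (x ! a)] = y} =
      {p \<in> off_diag_pairs n. transvection x p = y}"
    by (auto simp: off_diag_pairs_def transvection_def)
  then show ?thesis
    by (simp add: Pker_def)
qed

lemma Pker_nonneg: "0 \<le> Pker n x y"
proof -
  have "0 \<le> real n * (real n - 1)"
    by (cases n) auto
  then show ?thesis
    by (simp add: Pker_def)
qed

lemma Pker_sym:
  assumes "x \<in> St n k" and "y \<in> St n k"
  shows "Pker n x y = Pker n y x"
proof -
  have "{p \<in> off_diag_pairs n. transvection x p = y} = {p \<in> off_diag_pairs n. transvection y p = x}"
    using transvection_transvection assms by blast
  then show ?thesis
    by (simp add: Pker_eq_card)
qed

lemma sum_Pker_mult: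
  assumes x: "x \<in> St n k"
  shows "(\<Sum>y\<in>St n k. Pker n x y * h y) =
    (\<Sum>p\<in>off_diag_pairs n. h (transvection x p)) / (real n * (real n - 1))"
proof -
  have image: "transvection x ` off_diag_pairs n \<subseteq> St n k"
    using transvection_in_St[OF x] by blast
  have "(\<Sum>p\<in>off_diag_pairs n. h (transvection x p)) =
      (\<Sum>y\<in>transvection x ` off_diag_pairs n. \<Sum>p\<in>{p \<in> off_diag_pairs n. transvection x p = y}. h (transvection x p))"
    by (rule sum.image_gen) simp
  also have "\<dots> = (\<Sum>y\<in>transvection x ` off_diag_pairs n. real (card {p \<in> off_diag_pairs n. transvection x p = y}) * h y)"
    by (intro sum.cong) auto
  also have "\<dots> = (\<Sum>y\<in>St n k. real (card {p \<in> off_diag_pairs n. transvection x p = y}) * h y)"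
    using image by (intro sum.mono_neutral_left) auto
  finally show ?thesis
    by (simp add: Pker_eq_card sum_divide_distrib[symmetric] field_simps)
qed

lemma sum_Qker_mult:
  assumes x: "x \<in> St n k"
  shows "(\<Sum>y\<in>St n k. Qker n x y * h y) =
    (h x + (\<Sum>p\<in>off_diag_pairs n. h (transvection x p)) / (real n * (real n - 1))) / 2"
proof -
  have "(\<Sum>y\<in>St n k. Qker n x y * h y) =
      (\<Sum>y\<in>St n k. ((if x = y then h y else 0) + Pker n x y * h y) / 2)"
    by (intro sum.cong) (simp_all add: Qker_def field_simps)
  also have "\<dots> = (h x + (\<Sum>y\<in>St n k. Pker n x y * h y)) / 2"
    using x by (simp add: sum_divide_distrib[symmetric] sum.distrib)
  finally show ?thesis
    by (simp add: sum_Pker_mult[OF x])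
qed

lemma doubly_stochastic_Qker:
  assumes "2 \<le> n"
  shows "doubly_stochastic (St n k) (Qker n)"
proof
  show row: "(\<Sum>y\<in>St n k. Qker n x y) = 1" if "x \<in> St n k" for x
    using sum_Qker_mult[OF that, of "\<lambda>_. 1"] assms by (simp add: card_off_diag_pairs of_nat_diff)
  show "(\<Sum>x\<in>St n k. Qker n x y) = 1" if "y \<in> St n k" for y
    using row[OF that] that Pker_sym[of _ n k y] by (simp add: Qker_def eq_commute[of y])
qed (auto simp: Qker_def Pker_nonneg)

lemma Qker_diag_ge: "1/2 \<le> Qker n x x"
  by (simp add: Qker_def Pker_nonneg)

lemma Qker_transvection_ge:
  assumes "p \<in> off_diag_pairs n"
  shows "1 / (real n * (real n - 1)) / 2 \<le> Qker n x (transvection x p)"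
proof -
  define Q where "Q = {q \<in> off_diag_pairs n. transvection x q = transvection x p}"
  have "p \<in> Q" and "finite Q"
    using assms by (simp_all add: Q_def)
  then have "1 \<le> real (card Q)"
    by (auto simp: Suc_le_eq card_gt_0_iff)
  moreover have "real n * (real n - 1) > 0"
    using assms by (auto simp: off_diag_pairs_def)
  ultimately have "1 / (real n * (real n - 1)) \<le> real (card Q) / (real n * (real n - 1))"
    by (intro divide_right_mono) auto
  then have "1 / (real n * (real n - 1)) \<le> Pker n x (transvection x p)"
    by (simp add: Pker_eq_card Q_def)
  moreover have "Pker n x (transvection x p) / 2 \<le> Qker n x (transvection x p)"
    by (simp add: Qker_def)
  ultimately show ?thesis
    by (meson divide_right_mono order.trans zero_le_numeral)
qed

lemma Qker_support:
  assumes "Qker n x y \<noteq> 0"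
  shows "y \<in> insert x (transvection x ` off_diag_pairs n)"
proof (rule ccontr)
  assume "y \<notin> insert x (transvection x ` off_diag_pairs n)"
  then have "x \<noteq> y" and "{p \<in> off_diag_pairs n. transvection x p = y} = {}"
    by auto
  then show False
    using assms by (simp add: Qker_def Pker_eq_card)
qed

section \<open>Connectivity by row reduction\<close>

definition transvection_step :: "nat \<Rightarrow> nat \<Rightarrow> bool list list \<Rightarrow> bool list list \<Rightarrow> bool" where
  "transvection_step n k x y \<longleftrightarrow> x \<in> St n k \<and> (\<exists>p\<in>off_diag_pairs n. y = transvection x p)"

definition std_frame :: "nat \<Rightarrow> nat \<Rightarrow> bool list list" where
  "std_frame n k = map (\<lambda>i. if i < k then unit_vec k i else vzero k) [0..<n]"

lemma std_frame_in_St: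
  assumes "k \<le> n"
  shows "std_frame n k \<in> St n k"
proof (rule St_memI)
  show "spans k (std_frame n k)"
  proof (rule spans_if_unit_vecs_in_span)
    fix j assume "j < k"
    then have "j < length (std_frame n k)" and "std_frame n k ! j = unit_vec k j"
      using assms by (simp_all add: std_frame_def)
    then show "in_span k (std_frame n k) (unit_vec k j)"
      using in_span_nth[of j "std_frame n k" k] by simp
  qed
qed (auto simp: std_frame_def)

lemma transvection_step_sym: "transvection_step n k x y \<Longrightarrow> transvection_step n k y x"
  unfolding transvection_step_def using transvection_in_St transvection_transvection by metis

lemma St_if_rtranclp_transvection_step:
  "(transvection_step n k)\<^sup>*\<^sup>* x y \<Longrightarrow> x \<in> St n k \<Longrightarrow> y \<in> St n k"
  by (induction rule: rtranclp_induct) (auto simp: transvection_step_def intro: transvection_in_St)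

lemma add_vsum_reachable:
  assumes x: "x \<in> St n k" and b: "b < n" and T: "T \<subseteq> {..<n}" "b \<notin> T"
  shows "(transvection_step n k)\<^sup>*\<^sup>* x (x[b := vadd (x ! b) (vsum k x T)])"
proof -
  have "finite T"
    using T(1) finite_subset by blast
  then show ?thesis
    using T
  proof (induction T rule: finite_induct)
    case empty
    then show ?case
      using St_memD[OF x] b by (simp add: vadd_vzero)
  next
    case (insert a T)
    define y where "y = x[b := vadd (x ! b) (vsum k x T)]"
    have xy: "(transvection_step n k)\<^sup>*\<^sup>* x y"
      using insert by (simp add: y_def)
    have a: "a < n" "a \<noteq> b"
      using insert by auto
    then have "transvection_step n k y (transvection y (a, b))"
      using St_if_rtranclp_transvection_step[OF xy x] b
      by (auto simp: transvection_step_def off_diag_pairs_def)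
    moreover have "transvection y (a, b) = x[b := vadd (x ! b) (vsum k x (insert a T))]"
      using insert a b St_memD[OF x] by (simp add: y_def vsum_insert vadd_assoc transvection_def)
    ultimately show ?case
      using xy by (metis rtranclp.rtrancl_into_rtrancl)
  qed
qed

lemma later_row_in_combination:
  assumes rows: "\<forall>i<j. y ! i = unit_vec k i" and "j < k" and "j \<notin> S" and "vsum k y S = unit_vec k j"
  shows "\<exists>s\<in>S. j < s"
proof (rule ccontr)
  assume "\<not> (\<exists>s\<in>S. j < s)"
  then have "\<forall>s\<in>S. s < j"
    using \<open>j \<notin> S\<close> by (auto simp: not_less le_less)
  then have "{i \<in> S. y ! i ! j} = {}"
    using rows \<open>j < k\<close> by auto
  then have "\<not> vsum k y S ! j"
    using \<open>j < k\<close> by (simp only: nth_vsum card.empty) simp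
  with assms show False
    by simp
qed

lemma reach_combination_through_row:
  assumes y: "y \<in> St n k" and rows: "\<forall>i<j. y ! i = unit_vec k i" and j: "j < k" "k \<le> n"
  shows "\<exists>y' S. (transvection_step n k)\<^sup>*\<^sup>* y y' \<and> (\<forall>i<j. y' ! i = unit_vec k i) \<and>
    S \<subseteq> {..<n} \<and> j \<in> S \<and> vsum k y' S = unit_vec k j"
proof -
  note len = St_memD[OF y]
  have "\<exists>S \<subseteq> {..<n}. vsum k y S = unit_vec k j"
    using len(3) len(1) unfolding spans_def by simp
  then obtain S where S: "S \<subseteq> {..<n}" "vsum k y S = unit_vec k j"
    by blast
  show ?thesis
  proof (cases "j \<in> S")
    case True
    then show ?thesis using S rows by blast
  next
    case False
    \<comment> \<open>adding row \<open>j\<close> to a later row of the combination brings \<open>j\<close> into play\<close>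
    obtain s where s: "s \<in> S" "j < s"
      using later_row_in_combination[OF rows j(1) False S(2)] by blast
    define y' where "y' = transvection y (j, s)"
    have "(j, s) \<in> off_diag_pairs n"
      using s S j by (auto simp: off_diag_pairs_def)
    then have "transvection_step n k y y'"
      using y unfolding transvection_step_def y'_def by blast
    moreover have "vsum k y' (insert j S) = unit_vec k j"
    proof -
      have "vsum k y' S = vadd (unit_vec k j) (y ! j)"
        using vsum_transvection_in[OF y S(1) s(1), of j] s j False S len
        by (simp add: y'_def insert_absorb vsum_insert finite_subset[OF S(1)])
      then show ?thesis
        using False s j len finite_subset[OF S(1)]
        by (simp add: vsum_insert y'_def vadd_assoc vadd_self vadd_vzero)
    qed
    moreover have "\<forall>i<j. y' ! i = unit_vec k i"
      using rows s len j by (simp add: y'_def)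
    ultimately show ?thesis
      using S s j by (intro exI[of _ y'] exI[of _ "insert j S"]) auto
  qed
qed

lemma reach_unit_rows:
  assumes x: "x \<in> St n k" and "j \<le> k" "k \<le> n"
  shows "\<exists>y. (transvection_step n k)\<^sup>*\<^sup>* x y \<and> (\<forall>i<j. y ! i = unit_vec k i)"
  using \<open>j \<le> k\<close>
proof (induction j)
  case (Suc j)
  then obtain y where xy: "(transvection_step n k)\<^sup>*\<^sup>* x y" and rows: "\<forall>i<j. y ! i = unit_vec k i"
    by auto
  have y: "y \<in> St n k"
    using St_if_rtranclp_transvection_step[OF xy x] .
  have j: "j < k" "j < n"
    using Suc \<open>k \<le> n\<close> by auto
  obtain y1 S where yy1: "(transvection_step n k)\<^sup>*\<^sup>* y y1" and rows1: "\<forall>i<j. y1 ! i = unit_vec k i"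
    and S: "S \<subseteq> {..<n}" "j \<in> S" "vsum k y1 S = unit_vec k j"
    using reach_combination_through_row[OF y rows j(1) \<open>k \<le> n\<close>] by blast
  have y1: "y1 \<in> St n k"
    using St_if_rtranclp_transvection_step[OF yy1 y] .
  have "unit_vec k j = vsum k y1 (insert j (S - {j}))"
    using S by (simp add: insert_absorb)
  also have "\<dots> = vadd (vsum k y1 (S - {j})) (y1 ! j)"
    using finite_subset[OF S(1)] St_memD[OF y1] j by (intro vsum_insert) auto
  finally have "(transvection_step n k)\<^sup>*\<^sup>* y1 (y1[j := unit_vec k j])"
    using add_vsum_reachable[OF y1 j(2), of "S - {j}"] S(1) by (auto simp: vadd_commute)
  then show ?case
    using xy yy1 rows1 St_memD[OF y1] j
    by (intro exI[of _ "y1[j := unit_vec k j]"]) (auto simp: nth_list_update less_Suc_eq)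
qed (use rtranclp.rtrancl_refl in blast)

lemma reach_zero_rows:
  assumes y: "y \<in> St n k" and rows: "\<forall>i<k. y ! i = unit_vec k i" and "k + m \<le> n"
  shows "\<exists>y'. (transvection_step n k)\<^sup>*\<^sup>* y y' \<and> (\<forall>i<k. y' ! i = unit_vec k i) \<and>
    (\<forall>i. k \<le> i \<and> i < k + m \<longrightarrow> y' ! i = vzero k)"
  using \<open>k + m \<le> n\<close>
proof (induction m)
  case (Suc m)
  then obtain y' where yy': "(transvection_step n k)\<^sup>*\<^sup>* y y'" and rows': "\<forall>i<k. y' ! i = unit_vec k i"
    and zeros: "\<forall>i. k \<le> i \<and> i < k + m \<longrightarrow> y' ! i = vzero k"
    by auto
  have y': "y' \<in> St n k"
    using St_if_rtranclp_transvection_step[OF yy' y] .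
  note len = St_memD[OF y']
  define b where "b = k + m"
  define T where "T = {i. i < k \<and> y' ! b ! i}"
  have b: "b < n"
    using Suc by (simp add: b_def)
  have "vsum k y' T = y' ! b"
    using rows' len b by (subst vsum_unit_rows) (auto simp: T_def intro!: nth_equalityI)
  then have "vadd (y' ! b) (vsum k y' T) = vzero k"
    using len b by (simp add: vadd_self)
  moreover have "T \<subseteq> {..<n}" "b \<notin> T"
    using b by (auto simp: T_def b_def)
  ultimately have "(transvection_step n k)\<^sup>*\<^sup>* y' (y'[b := vzero k])"
    using add_vsum_reachable[OF y' b, of T] by simp
  then show ?case
    using yy' rows' zeros b len(1)
    by (intro exI[of _ "y'[b := vzero k]"]) (auto simp: b_def nth_list_update less_Suc_eq)
qed (use rows in auto)

lemma reach_std_frame: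
  assumes x: "x \<in> St n k" and "k \<le> n"
  shows "(transvection_step n k)\<^sup>*\<^sup>* x (std_frame n k)"
proof -
  obtain y where xy: "(transvection_step n k)\<^sup>*\<^sup>* x y" and rows: "\<forall>i<k. y ! i = unit_vec k i"
    using reach_unit_rows[OF x order.refl \<open>k \<le> n\<close>] by blast
  have y: "y \<in> St n k"
    using St_if_rtranclp_transvection_step[OF xy x] .
  obtain y' where yy': "(transvection_step n k)\<^sup>*\<^sup>* y y'" and rows': "\<forall>i<k. y' ! i = unit_vec k i"
    and zeros: "\<forall>i. k \<le> i \<and> i < n \<longrightarrow> y' ! i = vzero k"
    using reach_zero_rows[OF y rows, of "n - k"] \<open>k \<le> n\<close> by auto
  have "y' = std_frame n k"
    using St_memD[OF St_if_rtranclp_transvection_step[OF yy' y]] rows' zeros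
    by (intro nth_equalityI) (auto simp: std_frame_def)
  then show ?thesis
    using xy yy' by auto
qed

lemma St_connected:
  assumes "x \<in> St n k" and "y \<in> St n k" and "k \<le> n"
  shows "(transvection_step n k)\<^sup>*\<^sup>* x y"
proof -
  have "(transvection_step n k)\<^sup>*\<^sup>* (std_frame n k) y"
    using reach_std_frame[OF assms(2,3)] transvection_step_sym
    by (metis rtranclp_converseD symp_def symp_rtranclp)
  then show ?thesis
    using reach_std_frame[OF assms(1,3)] by auto
qed

section \<open>Existence of the mixing time\<close>

lemma Qpow_eq_kpow: "Qpow n k t = kpow (St n k) (Qker n) t"
  by (induction t) (simp_all add: fun_eq_iff)

lemma tv_dist_eq_tv_unif: "tv_dist n k t x = tv_unif (St n k) (Qker n) t x"
  by (simp add: tv_dist_def tv_unif_def Qpow_eq_kpow)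

text \<open>\<open>tau_mix\<close> is a \<open>LEAST\<close>, which says nothing unless some time mixes.\<close>
lemma tau_mix_mixes:
  assumes "2 \<le> n" and "k \<le> n"
  shows "\<forall>x\<in>St n k. tv_dist n k (tau_mix n k) x \<le> 1/4"
proof -
  interpret Q: doubly_stochastic "St n k" "Qker n"
    using doubly_stochastic_Qker[OF \<open>2 \<le> n\<close>] .
  define \<epsilon> where "\<epsilon> = 1 / (real n * (real n - 1)) / 2"
  have "real n * (real n - 1) \<ge> 2 * 1"
    using \<open>2 \<le> n\<close> by (intro mult_mono) auto
  then have \<epsilon>: "0 < \<epsilon>" "\<epsilon> \<le> 1/2"
    by (auto simp: \<epsilon>_def field_simps)
  have "\<exists>D. \<forall>x\<in>St n k. \<forall>y\<in>St n k. \<epsilon> ^ D \<le> kpow (St n k) (Qker n) D x y"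
  proof (rule Q.kpow_uniform_lower_bound[where R = "transvection_step n k"])
    show "\<And>x. x \<in> St n k \<Longrightarrow> \<epsilon> \<le> Qker n x x"
      using \<epsilon> Qker_diag_ge order.trans by blast
    show "\<And>w z. w \<in> St n k \<Longrightarrow> transvection_step n k w z \<Longrightarrow> z \<in> St n k \<and> \<epsilon> \<le> Qker n w z"
      unfolding transvection_step_def \<epsilon>_def using transvection_in_St Qker_transvection_ge by blast
  qed (use \<epsilon> St_connected \<open>k \<le> n\<close> in auto)
  then obtain D where "\<forall>x\<in>St n k. \<forall>y\<in>St n k. \<epsilon> ^ D \<le> kpow (St n k) (Qker n) D x y"
    by blast
  then have "\<exists>t. \<forall>x\<in>St n k. tv_dist n k t x \<le> 1/4"
    using Q.tv_unif_eventually_le[of "\<epsilon> ^ D" D "1/4"] \<epsilon> by (simp add: tv_dist_eq_tv_unif)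
  then show ?thesis
    unfolding tau_mix_def by (rule LeastI_ex)
qed

section \<open>A lower bound for the number of frames\<close>

text \<open>The frame with rows \<open>(e_i | u_i)\<close> for \<open>i < m\<close>, then \<open>e_m, \<dots>, e_(k-1)\<close>, then arbitrary rows \<open>ws\<close>;
  its first \<open>k\<close> rows form the invertible block matrix \<open>[[I, U], [0, I]]\<close>.\<close>
definition block_frame :: "nat \<Rightarrow> nat \<Rightarrow> bool list list \<Rightarrow> bool list list \<Rightarrow> bool list list" where
  "block_frame m k us ws = map (\<lambda>i. unit_vec m i @ us ! i) [0..<m] @ map (unit_vec k) [m..<k] @ ws"

lemma nth_block_frame:
  assumes "m \<le> k" "length us = m"
  shows "i < m \<Longrightarrow> block_frame m k us ws ! i = unit_vec m i @ us ! i"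
    and "m \<le> i \<Longrightarrow> i < k \<Longrightarrow> block_frame m k us ws ! i = unit_vec k i"
    and "k \<le> i \<Longrightarrow> block_frame m k us ws ! i = ws ! (i - k)"
  using assms by (auto simp: block_frame_def nth_append)

lemma block_frame_in_St:
  assumes mk: "m \<le> k" and kn: "k \<le> n"
    and us: "length us = m" "\<forall>u\<in>set us. length u = k - m"
    and ws: "length ws = n - k" "\<forall>w\<in>set ws. length w = k"
  shows "block_frame m k us ws \<in> St n k"
proof -
  define x where "x = block_frame m k us ws"
  have len: "length x = n"
    using mk kn us ws by (simp add: x_def block_frame_def)
  have row_len: "length (x ! i) = k" if "i < n" for i
    using that mk kn us ws nth_block_frame[OF mk us(1)] by (cases "i < m"; cases "i < k") (auto simp: x_def)
  have upper: "in_span k x (unit_vec k j)" if "m \<le> j" "j < k" for j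
    using in_span_nth[of j x k] nth_block_frame(2)[OF mk us(1) that] that kn len by (simp add: x_def)
  have lower: "in_span k x (unit_vec k j)" if j: "j < m" for j
  proof -
    define T where "T = {l. m \<le> l \<and> l < k \<and> us ! j ! (l - m)}"
    have "in_span k x (indicator_vec k T)"
      using upper by (rule in_span_indicator_vec) (auto simp: T_def)
    moreover have "in_span k x (x ! j)"
      using in_span_nth[of j x k] row_len[of j] j mk kn len by simp
    moreover have "vadd (x ! j) (indicator_vec k T) = unit_vec k j"
    proof (rule nth_equalityI)
      show "length (vadd (x ! j) (indicator_vec k T)) = length (unit_vec k j)"
        using row_len[of j] j mk kn by simp
    next
      fix l assume "l < length (vadd (x ! j) (indicator_vec k T))"
      then have l: "l < k"
        using row_len[of j] j mk kn by simp
      have "x ! j = unit_vec m j @ us ! j"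
        using nth_block_frame(1)[OF mk us(1) j] by (simp add: x_def)
      then show "vadd (x ! j) (indicator_vec k T) ! l = unit_vec k j ! l"
        using l j row_len[of j] mk kn by (cases "l < m") (auto simp: nth_append T_def)
    qed
    ultimately show ?thesis
      by (metis in_span_vadd)
  qed
  have "spans k x"
    using upper lower by (intro spans_if_unit_vecs_in_span) (meson not_less)
  then show ?thesis
    using len row_len by (auto simp: St_memI x_def)
qed

lemma inj_on_block_frame:
  assumes "m \<le> k"
  shows "inj_on (\<lambda>(us, ws). block_frame m k us ws) ({us. length us = m} \<times> UNIV)"
proof (rule inj_onI)
  fix p q
  assume "p \<in> {us. length us = m} \<times> UNIV" "q \<in> {us. length us = m} \<times> UNIV"
    and eq: "(\<lambda>(us, ws). block_frame m k us ws) p = (\<lambda>(us, ws). block_frame m k us ws) q"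
  then obtain us ws us' ws' where pq: "p = (us, ws)" "q = (us', ws')" and len: "length us = m" "length us' = m"
    by auto
  with eq have eq: "block_frame m k us ws = block_frame m k us' ws'"
    by simp
  have "us ! i = us' ! i" if "i < m" for i
    using arg_cong[OF eq, of "\<lambda>x. x ! i"] nth_block_frame(1)[OF assms len(1) that]
      nth_block_frame(1)[OF assms len(2) that] by simp
  then have "us = us'"
    using len by (auto intro: nth_equalityI)
  moreover have "ws = ws'"
    using arg_cong[OF eq, of "drop k"] len assms by (simp add: block_frame_def)
  ultimately show "p = q"
    using pq by simp
qed

lemma card_St_ge:
  assumes "k \<le> n"
  shows "2 ^ ((k - k div 2) * (k div 2) + k * (n - k)) \<le> card (St n k)"
proof -
  define m where "m = k div 2"
  define A :: "(bool list list \<times> bool list list) set"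
    where "A = {us. set us \<subseteq> {u. length u = k - m} \<and> length us = m} \<times>
      {ws. set ws \<subseteq> {w. length w = k} \<and> length ws = n - k}"
  have m: "m \<le> k"
    by (simp add: m_def)
  have vectors: "finite {u :: bool list. length u = L}" "card {u :: bool list. length u = L} = 2 ^ L" for L
    using finite_lists_length_eq[of "UNIV :: bool set" L] card_lists_length_eq[of "UNIV :: bool set" L]
    by simp_all
  have card_A: "card A = (2 ^ (k - m)) ^ m * (2 ^ k) ^ (n - k)"
    using card_lists_length_eq[OF vectors(1), of "k - m" m] card_lists_length_eq[OF vectors(1), of k "n - k"]
    by (simp add: A_def card_cartesian_product vectors(2))
  have "card A = card ((\<lambda>(us, ws). block_frame m k us ws) ` A)"
    using inj_on_block_frame[OF m] by (intro card_image[symmetric]) (auto simp: A_def elim: inj_on_subset)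
  also have "\<dots> \<le> card (St n k)"
    using block_frame_in_St[OF m assms] by (intro card_mono) (auto simp: A_def)
  finally show ?thesis
    using card_A by (simp add: m_def power_mult[symmetric] power_add)
qed

section \<open>The counting lower bound\<close>

lemma card_Qker_support_le:
  assumes "1 \<le> n"
  shows "card {y \<in> St n k. Qker n w y \<noteq> 0} \<le> n ^ 2"
proof -
  have "card {y \<in> St n k. Qker n w y \<noteq> 0} \<le> card (insert w (transvection w ` off_diag_pairs n))"
    using Qker_support by (intro card_mono) auto
  also have "\<dots> \<le> Suc (card (transvection w ` off_diag_pairs n))"
    by (simp add: card_insert_if)
  also have "\<dots> \<le> Suc (card (off_diag_pairs n))"
    by (simp add: card_image_le)
  also have "\<dots> \<le> n ^ 2"
    using assms by (cases n) (auto simp: card_off_diag_pairs power2_eq_square)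
  finally show ?thesis .
qed

lemma mult_le_block_frame_exponent:
  fixes n k :: nat
  assumes "k \<le> n"
  shows "n * k \<le> 4 * ((k - k div 2) * (k div 2) + k * (n - k)) + 1"
proof -
  define P where "P = (k - k div 2) * (k div 2)"
  have "k * k \<le> 4 * P + 1"
  proof (cases "even k")
    case True
    then obtain q where "k = 2 * q" by blast
    then show ?thesis by (simp add: P_def)
  next
    case False
    then obtain q where "k = 2 * q + 1" using oddE by blast
    then show ?thesis by (simp add: P_def algebra_simps)
  qed
  moreover define Q where "Q = k * (n - k)"
  then have "n * k = Q + k * k"
    using assms by (simp add: algebra_simps diff_mult_distrib2)
  ultimately show ?thesis
    unfolding P_def[symmetric] Q_def[symmetric] by arith
qed

lemma card_St_le_if_mixed:
  assumes n: "2 \<le> n" and "k \<le> n" and mix: "\<forall>x\<in>St n k. tv_dist n k t x \<le> 1/4"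
  shows "real (card (St n k)) \<le> 2 * real n ^ (2 * t)"
proof -
  interpret Q: doubly_stochastic "St n k" "Qker n"
    using doubly_stochastic_Qker n .
  define N where "N = real (card (St n k))"
  have x: "std_frame n k \<in> St n k"
    using std_frame_in_St[OF \<open>k \<le> n\<close>] .
  then have "N > 0"
    by (auto simp: N_def card_gt_0_iff)
  have "1 - real n ^ (2 * t) / N \<le> tv_unif (St n k) (Qker n) t (std_frame n k)"
    using Q.tv_unif_ge_few_successors[OF x card_Qker_support_le, of t] n
    by (simp add: N_def power_mult)
  also have "\<dots> \<le> 1/4"
    using mix x by (simp add: tv_dist_eq_tv_unif)
  finally have "3/4 * N \<le> real n ^ (2 * t)"
    using \<open>N > 0\<close> by (simp add: field_simps)
  then show ?thesis
    using \<open>N > 0\<close> by (simp add: N_def)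
qed

lemma tau_mix_ge_counting:
  assumes n: "8 \<le> n" and k: "1 \<le> k" "k \<le> n" and mix: "\<forall>x\<in>St n k. tv_dist n k t x \<le> 1/4"
  shows "ln 2 / 32 * (real n * real k / ln (exp 1 * real n)) \<le> real t"
proof -
  define M where "M = (k - k div 2) * (k div 2) + k * (n - k)"
  have "(2 :: real) ^ M \<le> real (card (St n k))"
    using of_nat_mono[OF card_St_ge[OF k(2)], where 'a = real] by (simp add: M_def)
  also have "\<dots> \<le> 2 * real n ^ (2 * t)"
    using card_St_le_if_mixed[OF _ k(2) mix] n by simp
  finally have "ln (2 ^ M) \<le> ln (2 * real n ^ (2 * t))"
    using n by (intro ln_mono) auto
  then have ln_bound: "real M * ln 2 \<le> ln 2 + real (2 * t) * ln (real n)"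
    using n by (simp add: ln_mult ln_realpow)
  have M_bound: "real n * real k / 16 \<le> real M - 1"
  proof -
    have "n * k \<le> 4 * M + 1"
      using mult_le_block_frame_exponent[OF k(2)] by (simp add: M_def)
    then have "real (n * k) \<le> real (4 * M + 1)"
      by (simp only: of_nat_le_iff)
    moreover have "8 \<le> real n * real k"
      using n k mult_mono[of 8 "real n" 1 "real k"] by simp
    ultimately show ?thesis
      by simp
  qed
  have "real n * real k / 16 * ln 2 \<le> (real M - 1) * ln 2"
    using M_bound by (intro mult_right_mono) auto
  also have "\<dots> \<le> 2 * real t * ln (real n)"
    using ln_bound by (simp add: algebra_simps)
  also have "\<dots> \<le> 2 * real t * ln (exp 1 * real n)"
    using n by (intro mult_left_mono) (auto simp: ln_mult)
  finally have "real n * real k * ln 2 \<le> 32 * (real t * ln (exp 1 * real n))"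
    by simp
  moreover have "0 < ln (exp 1 * real n)"
    using n by (simp add: ln_mult ln_ge_zero add_pos_nonneg)
  ultimately show ?thesis
    by (simp add: field_simps)
qed

section \<open>The coupon-collector lower bound\<close>

definition nonzero_rows :: "nat \<Rightarrow> nat \<Rightarrow> bool list list \<Rightarrow> nat" where
  "nonzero_rows n k y = card {i. i < n \<and> y ! i \<noteq> vzero k}"

lemma nonzero_rows_add_zero_rows: "nonzero_rows n k y + card {i. i < n \<and> y ! i = vzero k} = n"
proof -
  have "card {i. i < n \<and> y ! i \<noteq> vzero k} + card {i. i < n \<and> y ! i = vzero k} =
      card ({i. i < n \<and> y ! i \<noteq> vzero k} \<union> {i. i < n \<and> y ! i = vzero k})"
    by (rule card_Un_disjoint[symmetric]) auto
  also have "{i. i < n \<and> y ! i \<noteq> vzero k} \<union> {i. i < n \<and> y ! i = vzero k} = {..<n}"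
    by auto
  finally show ?thesis
    by (simp add: nonzero_rows_def)
qed

lemma nonzero_rows_std_frame:
  assumes "k \<le> n"
  shows "nonzero_rows n k (std_frame n k) = k"
proof -
  have "{i. i < n \<and> std_frame n k ! i \<noteq> vzero k} = {..<k}"
  proof (intro set_eqI iffI)
    fix i assume "i \<in> {i. i < n \<and> std_frame n k ! i \<noteq> vzero k}"
    then show "i \<in> {..<k}"
      by (cases "i < k") (auto simp: std_frame_def)
  next
    fix i assume i: "i \<in> {..<k}"
    then have "std_frame n k ! i ! i" and "\<not> vzero k ! i"
      using assms by (simp_all add: std_frame_def)
    then show "i \<in> {i. i < n \<and> std_frame n k ! i \<noteq> vzero k}"
      using i assms by auto
  qed
  then show ?thesis
    by (simp add: nonzero_rows_def)
qed

lemma nonzero_rows_transvection_le: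
  assumes "w \<in> St n k" and "b < n"
  shows "nonzero_rows n k (transvection w (a, b)) \<le> nonzero_rows n k w + of_bool (w ! a \<noteq> vzero k)"
proof (cases "w ! a = vzero k")
  case True
  then have "transvection w (a, b) = w"
    using St_memD[OF assms(1)] assms(2) by (intro nth_equalityI) (auto simp: vadd_vzero)
  then show ?thesis by simp
next
  case False
  have "{i. i < n \<and> transvection w (a, b) ! i \<noteq> vzero k} \<subseteq> insert b {i. i < n \<and> w ! i \<noteq> vzero k}"
    using St_memD[OF assms(1)] by auto
  then have "nonzero_rows n k (transvection w (a, b)) \<le> card (insert b {i. i < n \<and> w ! i \<noteq> vzero k})"
    unfolding nonzero_rows_def by (intro card_mono) auto
  also have "\<dots> \<le> nonzero_rows n k w + 1"
    by (simp add: nonzero_rows_def card_insert_if)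
  finally show ?thesis
    using False by simp
qed

lemma sum_off_diag_pairs_nonzero_source:
  "(\<Sum>p\<in>off_diag_pairs n. of_bool (w ! fst p \<noteq> vzero k) :: real) = real (n - 1) * real (nonzero_rows n k w)"
proof -
  have pairs: "off_diag_pairs n = Sigma {..<n} (\<lambda>a. {..<n} - {a})"
    by (auto simp: off_diag_pairs_def)
  have "(\<Sum>p\<in>off_diag_pairs n. of_bool (w ! fst p \<noteq> vzero k) :: real) =
      (\<Sum>a<n. \<Sum>b\<in>{..<n} - {a}. of_bool (w ! a \<noteq> vzero k))"
    unfolding pairs by (subst sum.Sigma) (auto simp: case_prod_beta)
  also have "\<dots> = (\<Sum>a<n. real (n - 1) * of_bool (w ! a \<noteq> vzero k))"
  proof (intro sum.cong refl)
    fix a assume "a \<in> {..<n}"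
    then have "card ({..<n} - {a}) = n - 1"
      by simp
    then show "(\<Sum>b\<in>{..<n} - {a}. of_bool (w ! a \<noteq> vzero k)) = real (n - 1) * of_bool (w ! a \<noteq> vzero k)"
      by simp
  qed
  also have "\<dots> = real (n - 1) * (\<Sum>a<n. of_bool (w ! a \<noteq> vzero k))"
    by (simp only: sum_distrib_left)
  also have "(\<Sum>a<n. of_bool (w ! a \<noteq> vzero k)) = real (nonzero_rows n k w)"
    by (simp add: sum_of_bool_eq nonzero_rows_def Int_def)
  finally show ?thesis .
qed

text \<open>Only a move whose source row is nonzero can create a nonzero row, and such a move is made with
  probability \<open>nonzero_rows / (2n)\<close>.\<close>
lemma sum_Qker_nonzero_rows_le:
  assumes w: "w \<in> St n k" and n: "2 \<le> n"
  shows "(\<Sum>y\<in>St n k. Qker n w y * real (nonzero_rows n k y)) \<le>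
    (1 + 1 / (2 * real n)) * real (nonzero_rows n k w)"
proof -
  define r where "r = real (nonzero_rows n k w)"
  have "(\<Sum>p\<in>off_diag_pairs n. real (nonzero_rows n k (transvection w p))) \<le>
      (\<Sum>p\<in>off_diag_pairs n. r + of_bool (w ! fst p \<noteq> vzero k))"
  proof (intro sum_mono)
    fix p assume "p \<in> off_diag_pairs n"
    then obtain a b where "p = (a, b)" "b < n"
      by (auto simp: off_diag_pairs_def)
    then show "real (nonzero_rows n k (transvection w p)) \<le> r + of_bool (w ! fst p \<noteq> vzero k)"
      using of_nat_mono[OF nonzero_rows_transvection_le[OF w \<open>b < n\<close>, of a], where 'a = real]
      by (simp add: r_def)
  qed
  also have "\<dots> = real (n * (n - 1)) * r + real (n - 1) * r"
    by (simp add: sum.distrib sum_off_diag_pairs_nonzero_source card_off_diag_pairs r_def)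
  finally have "(\<Sum>p\<in>off_diag_pairs n. real (nonzero_rows n k (transvection w p))) / (real n * (real n - 1))
      \<le> (real (n * (n - 1)) * r + real (n - 1) * r) / (real n * (real n - 1))"
    using n by (intro divide_right_mono) auto
  also have "\<dots> = r + r / real n"
    using n by (simp add: of_nat_diff field_simps)
  finally have moves: "(\<Sum>p\<in>off_diag_pairs n. real (nonzero_rows n k (transvection w p))) / (real n * (real n - 1))
      \<le> r + r / real n" .
  have "(\<Sum>y\<in>St n k. Qker n w y * real (nonzero_rows n k y)) =
      (r + (\<Sum>p\<in>off_diag_pairs n. real (nonzero_rows n k (transvection w p))) / (real n * (real n - 1))) / 2"
    using sum_Qker_mult[OF w] by (simp add: r_def)
  also have "\<dots> \<le> (r + (r + r / real n)) / 2"
    using moves by (intro divide_right_mono add_left_mono) auto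
  also have "\<dots> = (1 + 1 / (2 * real n)) * r"
    using n by (simp add: field_simps)
  finally show ?thesis
    by (simp add: r_def)
qed

lemma update_zero_row_in_St:
  assumes y: "y \<in> St n k" and i: "i < n" "y ! i = vzero k" and v: "length v = k"
  shows "y[i := v] \<in> St n k"
proof -
  note len = St_memD[OF y]
  have "in_span k (y[i := v]) u" if "length u = k" for u
  proof -
    have "\<exists>S \<subseteq> {..<n}. vsum k y S = u"
      using len(3) len(1) that unfolding spans_def by simp
    then obtain S where S: "S \<subseteq> {..<n}" "vsum k y S = u"
      by blast
    have "vsum k y (S - {i}) = u"
    proof (cases "i \<in> S")
      case True
      have "vsum k y S = vsum k y (insert i (S - {i}))"
        using True by (simp add: insert_absorb)
      also have "\<dots> = vadd (vsum k y (S - {i})) (y ! i)"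
        using finite_subset[OF S(1)] len i by (intro vsum_insert) auto
      finally show ?thesis
        using S i by (simp add: vadd_vzero)
    qed (use S in simp)
    moreover have "vsum k (y[i := v]) (S - {i}) = vsum k y (S - {i})"
      by (rule vsum_cong) simp
    ultimately show ?thesis
      using S len(1) unfolding in_span_def by (intro exI[of _ "S - {i}"]) auto
  qed
  then show ?thesis
    using len i v by (intro St_memI) (auto simp: nth_list_update spans_iff_in_span)
qed

lemma card_zero_row_le_half:
  assumes i: "i < n" and k: "1 \<le> k"
  shows "2 * card {y \<in> St n k. y ! i = vzero k} \<le> card (St n k)"
proof -
  define Z where "Z = {y \<in> St n k. y ! i = vzero k}"
  define flip where "flip y = y[i := unit_vec k 0]" for y
  have "inj_on flip Z"
  proof (rule inj_onI)
    fix y z assume "y \<in> Z" "z \<in> Z" "flip y = flip z"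
    then have "(y[i := unit_vec k 0])[i := vzero k] = (z[i := unit_vec k 0])[i := vzero k]"
      by (simp only: flip_def)
    moreover have "y ! i = vzero k" "z ! i = vzero k"
      using \<open>y \<in> Z\<close> \<open>z \<in> Z\<close> by (simp_all add: Z_def)
    ultimately show "y = z"
      using list_update_id[of y i] list_update_id[of z i] by (simp only: list_update_overwrite)
  qed
  moreover have "flip y \<notin> Z" if "y \<in> Z" for y
  proof -
    have "flip y ! i ! 0"
      using that St_memD[of y n k] i k by (simp add: Z_def flip_def)
    then show ?thesis
      using k by (auto simp: Z_def)
  qed
  ultimately have "2 * card Z = card (flip ` Z \<union> Z)"
    by (subst card_Un_disjoint) (auto simp: card_image Z_def)
  also have "\<dots> \<le> card (St n k)"
    using update_zero_row_in_St[OF _ i] k by (intro card_mono) (auto simp: Z_def flip_def)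
  finally show ?thesis
    by (simp add: Z_def)
qed

lemma sum_card_zero_rows:
  "(\<Sum>y\<in>St n k. card {i. i < n \<and> y ! i = vzero k}) = (\<Sum>i<n. card {y \<in> St n k. y ! i = vzero k})"
proof -
  have "(\<Sum>y\<in>St n k. card {i. i < n \<and> y ! i = vzero k}) = (\<Sum>y\<in>St n k. \<Sum>i<n. of_bool (y ! i = vzero k))"
    by (simp add: sum_of_bool_eq Int_def)
  also have "\<dots> = (\<Sum>i<n. \<Sum>y\<in>St n k. of_bool (y ! i = vzero k))"
    by (rule sum.swap)
  also have "\<dots> = (\<Sum>i<n. card {y \<in> St n k. y ! i = vzero k})"
    by (simp add: sum_of_bool_eq Int_def)
  finally show ?thesis .
qed

lemma card_few_nonzero_rows:
  assumes "1 \<le> k" and "1 \<le> n"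
  shows "7 * card {y \<in> St n k. 8 * nonzero_rows n k y \<le> n} \<le> 4 * card (St n k)"
proof -
  define L where "L = {y \<in> St n k. 8 * nonzero_rows n k y \<le> n}"
  define zeros where "zeros y = card {i. i < n \<and> y ! i = vzero k}" for y
  have "2 * (\<Sum>y\<in>St n k. zeros y) = (\<Sum>i<n. 2 * card {y \<in> St n k. y ! i = vzero k})"
    by (simp add: zeros_def sum_card_zero_rows sum_distrib_left)
  also have "\<dots> \<le> n * card (St n k)"
    using card_zero_row_le_half[OF _ assms(1)] sum_mono[of "{..<n}" _ "\<lambda>_. card (St n k)"] by simp
  finally have zeros_le: "2 * (\<Sum>y\<in>St n k. zeros y) \<le> n * card (St n k)" .
  have "card L * (7 * n) = (\<Sum>y\<in>L. 7 * n)"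
    by simp
  also have "\<dots> \<le> (\<Sum>y\<in>L. 8 * zeros y)"
  proof (intro sum_mono)
    fix y assume "y \<in> L"
    then have "8 * nonzero_rows n k y \<le> n"
      by (simp add: L_def)
    moreover have "nonzero_rows n k y + zeros y = n"
      by (simp add: zeros_def nonzero_rows_add_zero_rows)
    ultimately show "7 * n \<le> 8 * zeros y"
      by linarith
  qed
  also have "\<dots> \<le> 8 * (\<Sum>y\<in>St n k. zeros y)"
    by (simp add: sum_distrib_left[symmetric] L_def sum_mono2)
  finally have "card L * (7 * n) \<le> 8 * (\<Sum>y\<in>St n k. zeros y)" .
  moreover have "n * (4 * card (St n k)) = 4 * (n * card (St n k))" "n * (7 * card L) = card L * (7 * n)"
    by simp_all
  ultimately have "n * (7 * card L) \<le> n * (4 * card (St n k))"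
    using zeros_le by linarith
  then show ?thesis
    using assms(2) by (simp add: L_def)
qed

lemma card_many_nonzero_rows:
  assumes "1 \<le> k" and "k \<le> n"
  shows "3 * card (St n k) \<le> 7 * card {y \<in> St n k. n < 8 * nonzero_rows n k y}"
proof -
  define B where "B = {y \<in> St n k. n < 8 * nonzero_rows n k y}"
  have B: "B \<subseteq> St n k" and "St n k - B = {y \<in> St n k. 8 * nonzero_rows n k y \<le> n}"
    by (auto simp: B_def)
  then have "7 * card (St n k - B) \<le> 4 * card (St n k)"
    using card_few_nonzero_rows assms by simp
  then show ?thesis
    using card_Diff_subset[OF finite_subset[OF B] B] card_mono[OF _ B] by (simp add: B_def)
qed

lemma expected_nonzero_rows_le:
  assumes n: "2 \<le> n" and "k \<le> n"
  shows "(\<Sum>y\<in>St n k. Qpow n k t (std_frame n k) y * real (nonzero_rows n k y)) \<le>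
    exp (real t / (2 * real n)) * real k"
proof -
  interpret Q: doubly_stochastic "St n k" "Qker n"
    using doubly_stochastic_Qker n .
  have "(\<Sum>y\<in>St n k. Qpow n k t (std_frame n k) y * real (nonzero_rows n k y)) \<le>
      (1 + 1 / (2 * real n)) ^ t * real (nonzero_rows n k (std_frame n k))"
    unfolding Qpow_eq_kpow using n
    by (intro Q.kpow_expectation_le std_frame_in_St sum_Qker_nonzero_rows_le \<open>k \<le> n\<close>) auto
  also have "\<dots> \<le> exp (real t / (2 * real n)) * real k"
  proof -
    have "-1 \<le> 1 / (2 * real n)"
      by (rule order.trans[of _ 0]) simp_all
    then have "(1 + 1 / (2 * real n)) ^ t \<le> exp (real t / (2 * real n))"
      using one_plus_power_le_exp[of "1 / (2 * real n)" t] by simp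
    then show ?thesis
      using nonzero_rows_std_frame[OF \<open>k \<le> n\<close>] by (simp add: mult_right_mono)
  qed
  finally show ?thesis .
qed

lemma tau_mix_ge_coupon:
  assumes n: "2 \<le> n" and k: "1 \<le> k" "k \<le> n" and small: "224 * real k \<le> 5 * sqrt (real n)"
    and mix: "\<forall>x\<in>St n k. tv_dist n k t x \<le> 1/4"
  shows "real n * ln (real n) \<le> real t"
proof (rule ccontr)
  assume "\<not> real n * ln (real n) \<le> real t"
  then have growth: "exp (real t / (2 * real n)) < sqrt (real n)"
    using n by (intro exp_lt_sqrt_if_lt_mult_ln) auto
  interpret Q: doubly_stochastic "St n k" "Qker n"
    using doubly_stochastic_Qker n .
  define x where "x = std_frame n k"
  define B where "B = {y \<in> St n k. n < 8 * nonzero_rows n k y}"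
  have x: "x \<in> St n k"
    using std_frame_in_St[OF k(2)] by (simp add: x_def)
  have B: "B \<subseteq> St n k"
    by (auto simp: B_def)
  have "real (3 * card (St n k)) \<le> real (7 * card B)"
    using card_many_nonzero_rows[OF k] by (simp only: of_nat_le_iff B_def)
  moreover have "0 < real (card (St n k))"
    using x by (auto simp: card_gt_0_iff)
  ultimately have "3/7 \<le> real (card B) / real (card (St n k))"
    by (simp add: field_simps)
  moreover have "(\<Sum>y\<in>B. Qpow n k t x y) \<le>
      (\<Sum>y\<in>St n k. Qpow n k t x y * real (nonzero_rows n k y)) / (real n / 8)"
    using n B by (intro sum_le_markov) (auto simp: B_def Qpow_eq_kpow Q.kpow_nonneg)
  \<comment> \<open>\<open>224\<close> makes Markov's bound \<open>8 k / sqrt n\<close> at most \<open>5/28 = 3/7 - 1/4\<close>\<close>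
  then have "(\<Sum>y\<in>B. Qpow n k t x y) < 5/28"
  proof (rule order.strict_trans1)
    have "(\<Sum>y\<in>St n k. Qpow n k t x y * real (nonzero_rows n k y)) / (real n / 8)
        \<le> exp (real t / (2 * real n)) * real k / (real n / 8)"
      using expected_nonzero_rows_le[OF n k(2), of t] n unfolding x_def by (intro divide_right_mono) auto
    also have "\<dots> < sqrt (real n) * real k / (real n / 8)"
      using growth k n by (intro divide_strict_right_mono mult_strict_right_mono) auto
    also have "\<dots> \<le> sqrt (real n) * (5 * sqrt (real n) / 224) / (real n / 8)"
      using small n by (intro divide_right_mono mult_left_mono) auto
    also have "\<dots> = 5/28"
      using n by (simp add: field_simps)
    finally show "(\<Sum>y\<in>St n k. Qpow n k t x y * real (nonzero_rows n k y)) / (real n / 8) < 5/28" .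
  qed
  ultimately have "1/4 < tv_dist n k t x"
    using Q.tv_unif_ge_mass_diff[OF x B, of t] by (simp add: tv_dist_eq_tv_unif Qpow_eq_kpow)
  then show False
    using mix x by force
qed

lemma eventually_log_log_le_sqrt:
  "eventually (\<lambda>n::nat. 224 * (ln (real n) * ln (exp 1 * real n)) \<le> 5 * sqrt (real n)) sequentially"
  by real_asymp

lemma tau_mix_ge_max:
  assumes n: "8 \<le> n" and k: "1 \<le> k" "k \<le> n"
    and large: "224 * (ln (real n) * ln (exp 1 * real n)) \<le> 5 * sqrt (real n)"
  shows "ln 2 / 64 * max (real n * ln (real n)) (real n * real k / ln (exp 1 * real n)) \<le> real (tau_mix n k)"
proof -
  let ?T = "real (tau_mix n k)" and ?A = "real n * ln (real n)" and ?B = "real n * real k / ln (exp 1 * real n)"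
  have mix: "\<forall>x\<in>St n k. tv_dist n k (tau_mix n k) x \<le> 1/4"
    using tau_mix_mixes n k by simp
  have ln_pos: "0 < ln (real n)" "0 < ln (exp 1 * real n)" and ln2: "0 < ln (2 :: real)" "ln (2 :: real) \<le> 1"
    using n ln_le_minus_one[of 2] by (auto simp: ln_mult intro: add_pos_pos)
  have "ln 2 / 64 * ?B \<le> ln 2 / 32 * ?B"
    using ln_pos ln2 by (intro mult_right_mono) auto
  also have "\<dots> \<le> ?T"
    using tau_mix_ge_counting[OF n k mix] .
  finally have "ln 2 / 64 * ?B \<le> ?T" .
  moreover have "ln 2 / 64 * ?A \<le> ?T" if "?B < ?A"
  proof -
    \<comment> \<open>for \<open>k \<ge> (5/224) sqrt n\<close> the counting bound dominates\<close>
    have "real k < ln (real n) * ln (exp 1 * real n)"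
      using that ln_pos n by (simp add: field_simps)
    then have "224 * real k \<le> 5 * sqrt (real n)"
      using large by linarith
    then have "?A \<le> ?T"
      using tau_mix_ge_coupon[OF _ k _ mix] n by simp
    moreover have "ln 2 / 64 * ?A \<le> ?A"
      using ln2 ln_pos by (intro mult_left_le_one_le) auto
    ultimately show ?thesis
      by linarith
  qed
  ultimately show ?thesis
    by (cases "?B < ?A") (auto simp: max_def)
qed

theorem theorem1p2:
  shows "\<exists>c::real. c > 0 \<and> (\<exists>N::nat. \<forall>n k. N \<le> n \<longrightarrow> 1 \<le> k \<longrightarrow> k \<le> n \<longrightarrow>
           real (tau_mix n k) \<ge>
             c * max (real n * ln (real n)) (real n * real k / ln (exp 1 * real n)))"
proof -
  obtain N0 where N0: "\<And>n. N0 \<le> n \<Longrightarrow> 224 * (ln (real n) * ln (exp 1 * real n)) \<le> 5 * sqrt (real n)"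
    using eventually_log_log_le_sqrt unfolding eventually_sequentially by blast
  have "ln 2 / 64 * max (real n * ln (real n)) (real n * real k / ln (exp 1 * real n)) \<le> real (tau_mix n k)"
    if "max N0 8 \<le> n" "1 \<le> k" "k \<le> n" for n k
    using tau_mix_ge_max[of n k] N0[of n] that by simp
  then show ?thesis
    by (intro exI[of _ "ln 2 / 64"]) (auto intro!: exI[of _ "max N0 8"])
qed

end
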